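(* There is a non-adaptive deterministic group testing algorithm on $n$ items that makes $t=\log n+0.5\log\log n+O(1)$ tests and decides whether $d\le 1$, and if $d=1$ detects the defective item.
   Context: Group testing: items $X=[n]$, unknown defective set $I\subseteq X$ with $d=|I|$. A test $Q\subseteq X$ has answer $1$ if $Q\cap I\neq\emptyset$ and $0$ otherwise. A non-adaptive algorithm fixes all its tests in advance, then computes its output from the answers. Logarithms are base 2. *)

theory Defs
  imports Complex_Main
begin

definition answers :: "nat set list \<Rightarrow> nat set \<Rightarrow> bool list" where
  "answers tests I = map (\<lambda>Q. Q \<inter> I \<noteq> {}) tests"

text \<open>A non-adaptive algorithm on items {1..n}: a list of tests (subsets of {1..n}) and
  a decoder from the answer vector to (claim "d <= 1", claimed defective item).\<close>
definition decides_le1_and_finds :: "nat \<Rightarrow> nat set list \<Rightarrow> (bool list \<Rightarrow> bool \<times> nat) \<Rightarrow> bool" where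
  "decides_le1_and_finds n tests dec \<longleftrightarrow>
     (\<forall>Q \<in> set tests. Q \<subseteq> {1..n}) \<and>
     (\<forall>I. I \<subseteq> {1..n} \<longrightarrow>
        (fst (dec (answers tests I)) \<longleftrightarrow> card I \<le> 1) \<and>
        (\<forall>x. I = {x} \<longrightarrow> snd (dec (answers tests I)) = x))"

end

theory Submission
  imports Defs
begin

text \<open>Give each of the n items its own code word, an m-element subset of a set of 2m tests;
  this is possible as soon as n \<le> C(2m, m). Item x takes part in test j iff j lies in its
  code word, so the positive tests form the union of the code words of the defectives.
  Distinct code words of equal weight m have a union of more than m elements, hence
  d \<le> 1 iff at most m tests are positive, and for d = 1 the positive tests are exactly the
  code word of the defective item. Finally C(2m, m) \<ge> 4^m / (2 sqrt m), so n \<le> C(2m, m)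
  already holds for some 2m = log n + 0.5 log log n + O(1).\<close>

lemma central_binomial_Suc:
  "Suc m * ((2 * Suc m) choose Suc m) = 2 * (2 * m + 1) * ((2 * m) choose m)"
proof -
  have "Suc m * ((2 * Suc m) choose Suc m) = 2 * Suc m * ((2 * m + 1) choose m)"
    using Suc_times_binomial[of m "2 * m + 1"] by simp
  also have "(2 * m + 1) choose m = (2 * m + 1) choose Suc m"
    using binomial_symmetric[of m "2 * m + 1"] by simp
  finally have "Suc m * ((2 * Suc m) choose Suc m) = 2 * (Suc m * (Suc (2 * m) choose Suc m))"
    by simp
  also have "\<dots> = 2 * ((2 * m + 1) * ((2 * m) choose m))"
    using Suc_times_binomial[of m "2 * m"] by simp
  finally show ?thesis by simp
qed

lemma central_binomial_lower_bound_sqrt: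
  "1 \<le> m \<Longrightarrow> 16 ^ m \<le> 4 * m * ((2 * m) choose m)\<^sup>2"
proof (induction m rule: nat_induct_at_least)
  case base
  show ?case by (simp add: numeral_eq_Suc)
next
  case (Suc m)
  have "Suc m * (4 * m) \<le> (2 * m + 1)\<^sup>2"
    by (simp add: power2_eq_square algebra_simps)
  then have step: "Suc m * (4 * m * ((2 * m) choose m)\<^sup>2) \<le> (2 * m + 1)\<^sup>2 * ((2 * m) choose m)\<^sup>2"
    by (metis mult.assoc mult_le_mono1)
  have "Suc m * 16 ^ Suc m = 16 * (Suc m * 16 ^ m)" by simp
  also have "\<dots> \<le> 16 * (Suc m * (4 * m * ((2 * m) choose m)\<^sup>2))"
    using Suc.IH by (intro mult_left_mono) auto
  also have "\<dots> \<le> 16 * ((2 * m + 1)\<^sup>2 * ((2 * m) choose m)\<^sup>2)"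
    using step by simp
  also have "\<dots> = 4 * (Suc m * ((2 * Suc m) choose Suc m))\<^sup>2"
    by (simp only: central_binomial_Suc power_mult_distrib) simp
  also have "\<dots> = Suc m * (4 * Suc m * ((2 * Suc m) choose Suc m)\<^sup>2)"
    by (simp only: power_mult_distrib power2_eq_square ac_simps)
  finally show ?case by (simp only: mult_le_cancel1)
qed

definition code_tests :: "nat \<Rightarrow> nat \<Rightarrow> (nat \<Rightarrow> nat set) \<Rightarrow> nat set list" where
  "code_tests n k c = map (\<lambda>j. {x \<in> {1..n}. j \<in> c x}) [0..<k]"

definition positives :: "bool list \<Rightarrow> nat set" where
  "positives ans = {j. j < length ans \<and> ans ! j}"

definition code_decoder :: "nat \<Rightarrow> nat \<Rightarrow> (nat \<Rightarrow> nat set) \<Rightarrow> bool list \<Rightarrow> bool \<times> nat" where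
  "code_decoder n w c ans = (card (positives ans) \<le> w, inv_into {1..n} c (positives ans))"

lemma positives_answers_code_tests:
  assumes "I \<subseteq> {1..n}" and "\<And>x. x \<in> {1..n} \<Longrightarrow> c x \<subseteq> {..<k}"
  shows "positives (answers (code_tests n k c) I) = (\<Union>x\<in>I. c x)"
proof -
  have "answers (code_tests n k c) I ! j \<longleftrightarrow> (\<exists>x\<in>I. j \<in> c x)" if "j < k" for j
    using that assms(1) by (fastforce simp: answers_def code_tests_def)
  moreover have "j < k" if "j \<in> c x" "x \<in> I" for j x
    using that assms by blast
  ultimately show ?thesis
    by (auto simp: positives_def answers_def code_tests_def)
qed

lemma card_Un_gt_if_neq:
  assumes "finite A" "finite B" "card A = w" "card B = w" "A \<noteq> B"
  shows "w < card (A \<union> B)"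
proof -
  have "\<not> B \<subseteq> A" using assms card_subset_eq by metis
  then have "A \<subset> A \<union> B" by blast
  then show ?thesis using assms psubset_card_mono by (metis finite_UnI)
qed

lemma card_UN_le_weight_iff:
  assumes inj: "inj_on c A" and code: "\<And>x. x \<in> A \<Longrightarrow> finite (c x) \<and> card (c x) = w"
    and I: "I \<subseteq> A" "finite I"
  shows "card (\<Union>x\<in>I. c x) \<le> w \<longleftrightarrow> card I \<le> 1"
proof (cases "card I \<le> 1")
  case True
  then consider "I = {}" | x where "I = {x}"
    using \<open>finite I\<close> by (metis One_nat_def card_1_singletonE card_0_eq le_Suc_eq le_zero_eq)
  then show ?thesis using I code by cases auto
next
  case False
  then obtain x y where xy: "x \<in> I" "y \<in> I" "x \<noteq> y"
    using \<open>finite I\<close> by (metis One_nat_def card_le_Suc0_iff_eq)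
  with I inj have "c x \<noteq> c y" by (meson inj_on_def subsetD)
  with xy I code have "w < card (c x \<union> c y)"
    by (intro card_Un_gt_if_neq) auto
  also have "\<dots> \<le> card (\<Union>x\<in>I. c x)"
    using xy I code by (intro card_mono) auto
  finally show ?thesis using False by simp
qed

lemma code_tests_decides_le1:
  assumes inj: "inj_on c {1..n}"
    and code: "\<And>x. x \<in> {1..n} \<Longrightarrow> c x \<subseteq> {..<k} \<and> card (c x) = w"
  shows "decides_le1_and_finds n (code_tests n k c) (code_decoder n w c)"
  unfolding decides_le1_and_finds_def
proof (intro conjI allI impI ballI)
  show "Q \<subseteq> {1..n}" if "Q \<in> set (code_tests n k c)" for Q
    using that by (auto simp: code_tests_def)
next
  fix I assume I: "I \<subseteq> {1..n}"
  have positives: "positives (answers (code_tests n k c) I) = (\<Union>x\<in>I. c x)"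
    using I code by (intro positives_answers_code_tests) auto
  show "snd (code_decoder n w c (answers (code_tests n k c) I)) = x" if "I = {x}" for x
    unfolding code_decoder_def positives using that I inj by simp
  have "\<And>x. x \<in> {1..n} \<Longrightarrow> finite (c x) \<and> card (c x) = w"
    using code finite_subset by blast
  then show "fst (code_decoder n w c (answers (code_tests n k c) I)) \<longleftrightarrow> card I \<le> 1"
    unfolding code_decoder_def positives fst_conv
    using I inj by (intro card_UN_le_weight_iff) (auto intro: finite_subset)
qed

lemma constant_weight_scheme:
  assumes "n \<le> k choose w"
  shows "\<exists>tests dec. decides_le1_and_finds n tests dec \<and> length tests = k"
proof -
  let ?words = "{B. B \<subseteq> {..<k} \<and> card B = w}"
  have "card {1..n} \<le> card ?words"
    using assms n_subsets[of "{..<k}" w] by simp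
  moreover have "finite ?words"
    by (rule finite_subset[of _ "Pow {..<k}"]) auto
  ultimately obtain c where "inj_on c {1..n}" "c ` {1..n} \<subseteq> ?words"
    using card_le_inj[of "{1..n}" ?words] by auto
  then have "decides_le1_and_finds n (code_tests n k c) (code_decoder n w c)"
    by (intro code_tests_decides_le1) blast+
  moreover have "length (code_tests n k c) = k" by (simp add: code_tests_def)
  ultimately show ?thesis by blast
qed

lemma log2_le_double:
  fixes x :: real
  assumes "1 \<le> x"
  shows "log 2 x \<le> 2 * x"
proof -
  have "ln (1 / 2 :: real) \<le> 1 / 2 - 1" by (rule ln_le_minus_one) simp
  then have ln2: "1 \<le> 2 * ln (2 :: real)" by (simp add: ln_div)
  have "ln x \<le> x - 1" using assms by (intro ln_le_minus_one) simp
  also have "\<dots> \<le> x * (2 * ln 2)"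
    using mult_left_mono[OF ln2, of x] assms by linarith
  finally show ?thesis by (simp add: log_def pos_divide_le_eq)
qed

lemma le_central_binomial_of_log_bounds:
  fixes n m :: nat
  assumes n: "2 \<le> n"
    and lower: "log 2 n + 0.5 * log 2 (log 2 n) + 2 \<le> 2 * m"
    and upper: "m \<le> 4 * log 2 n"
  shows "n \<le> (2 * m) choose m"
proof -
  define l where "l = log 2 n"
  have l: "1 \<le> l" unfolding l_def using n by (subst le_log_iff) auto
  then have "0 \<le> log 2 l" by simp
  then have "1 \<le> real m" using l lower[folded l_def] by linarith
  then have "1 \<le> m" by simp
  have "real (n\<^sup>2 * 4 * m) \<le> 16 * n\<^sup>2 * l"
    using mult_left_mono[OF upper, of "4 * (real n)\<^sup>2"] by (simp add: l_def algebra_simps)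
  also have "\<dots> = 2 powr l * 2 powr l * 2 powr (log 2 l) * 2 powr 4"
    using n l by (simp add: l_def power2_eq_square)
  also have "\<dots> = 2 powr (l + l + log 2 l + 4)"
    by (simp only: powr_add)
  also have "\<dots> \<le> 2 powr (4 * m)"
    using lower by (intro powr_mono) (auto simp: l_def)
  also have "\<dots> = real (16 ^ m)"
    by (simp add: powr_realpow power_mult flip: of_nat_mult)
  finally have "n\<^sup>2 * 4 * m \<le> 16 ^ m" by (simp only: of_nat_le_iff)
  also have "\<dots> \<le> 4 * m * ((2 * m) choose m)\<^sup>2"
    using \<open>1 \<le> m\<close> by (rule central_binomial_lower_bound_sqrt)
  finally have "n\<^sup>2 \<le> ((2 * m) choose m)\<^sup>2" using \<open>1 \<le> m\<close> by simp
  then show ?thesis by (rule power2_le_imp_le) simp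
qed

theorem lemma9:
  shows "\<exists>C::real. \<forall>n::nat. n \<ge> 2 \<longrightarrow>
           (\<exists>tests dec. decides_le1_and_finds n tests dec \<and>
              \<bar>real (length tests) - (log 2 n + 0.5 * log 2 (log 2 n))\<bar> \<le> C)"
proof (intro exI[of _ 4] allI impI)
  fix n :: nat
  assume n: "2 \<le> n"
  define l where "l = log 2 n"
  define L where "L = l + 0.5 * log 2 l"
  define m where "m = nat \<lceil>L / 2\<rceil> + 1"
  have "1 \<le> l" unfolding l_def using n by (subst le_log_iff) auto
  then have "0 \<le> log 2 l" and "log 2 l \<le> 2 * l" by (simp_all add: log2_le_double)
  then have "0 \<le> L" using \<open>1 \<le> l\<close> by (simp add: L_def)
  then have "real m = \<lceil>L / 2\<rceil> + 1" by (simp add: m_def)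
  then have m: "L + 2 \<le> 2 * m" "2 * m \<le> L + 4"
    using ceiling_correct[of "L / 2"] by linarith+
  moreover from m have "m \<le> 4 * l"
    using \<open>1 \<le> l\<close> \<open>log 2 l \<le> 2 * l\<close> unfolding L_def by linarith
  ultimately have "n \<le> (2 * m) choose m"
    using le_central_binomial_of_log_bounds[OF n] unfolding L_def l_def by blast
  then obtain tests dec where "decides_le1_and_finds n tests dec" "length tests = 2 * m"
    using constant_weight_scheme by blast
  moreover have "\<bar>real (2 * m) - L\<bar> \<le> 4" using m by linarith
  ultimately show "\<exists>tests dec. decides_le1_and_finds n tests dec \<and>
      \<bar>real (length tests) - (log 2 n + 0.5 * log 2 (log 2 n))\<bar> \<le> 4"
    unfolding L_def l_def by auto
qed

end
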